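(* Let $k>0$ and let $p(n,j;k),q(n,j;k)$ be as in the context. Define $P_n(x;k)=\sum_{j=0}^{\lfloor (n-1)/2\rfloor}p(n,j;k)x^j(1+x)^{n-1-2j}$ and $Q_n(x;k)=\sum_{j=0}^{\lfloor n/2\rfloor}q(n,j;k)x^j(1+x)^{n-2j}$, so $P_0(x;k)=0$, $Q_0(x;k)=1$. Then for $n\ge0$ (terms with factor $n$ being $0$ when $n=0$) $$P_{n+1}(x;k)=(1+(2kn-2k+1)x)P_n(x;k)+2kx(1-x)P_n'(x;k)+2knxP_{n-1}(x;k)+Q_n(x;k),$$ $$Q_{n+1}(x;k)=2knxQ_n(x;k)+2kx(1-x)Q_n'(x;k)+2knxQ_{n-1}(x;k)+(2k-1)xP_n(x;k),$$ where $'$ denotes $d/dx$.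
   Context: The numbers $p(n,j;k),q(n,j;k)$ ($n\ge0$, $j\in\mathbb{Z}$) are determined by $q(0,0;k)=1$, $q(0,j;k)=0$ for $j\ne0$, $p(0,j;k)=0$ for all $j$, $p(n,j;k)=q(n,j;k)=0$ for $j<0$, and for $n\ge0$: $p(n+1,j;k)=(1+2kj)p(n,j;k)+4k(n-2j+1)p(n,j-1;k)+2kn\,p(n-1,j-1;k)+q(n,j;k)$ and $q(n+1,j;k)=2kj\,q(n,j;k)+4k(n-2j+2)q(n,j-1;k)+2kn\,q(n-1,j-1;k)+(2k-1)p(n,j-1;k)$ (terms with factor $n$ vanish when $n=0$). *)

theory Defs
  imports "HOL-Analysis.Analysis"
begin

fun pp :: "real \<Rightarrow> nat \<Rightarrow> int \<Rightarrow> real"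
and qq :: "real \<Rightarrow> nat \<Rightarrow> int \<Rightarrow> real" where
  "pp k 0 j = 0"
| "qq k 0 j = (if j = 0 then 1 else 0)"
| "pp k (Suc n) j = (if j < 0 then 0 else
      (1 + 2*k * of_int j) * pp k n j + 4*k*(real n - 2 * of_int j + 1) * pp k n (j-1)
      + 2*k*real n * pp k (n-1) (j-1) + qq k n j)"
| "qq k (Suc n) j = (if j < 0 then 0 else
      2*k * of_int j * qq k n j + 4*k*(real n - 2 * of_int j + 2) * qq k n (j-1)
      + 2*k*real n * qq k (n-1) (j-1) + (2*k-1) * pp k n (j-1))"

definition PP :: "real \<Rightarrow> nat \<Rightarrow> real \<Rightarrow> real" where
  "PP k n x = (\<Sum>j\<in>{0..(int n - 1) div 2}.
      pp k n j * x ^ nat j * (1 + x) ^ nat (int n - 1 - 2*j))"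

definition QQ :: "real \<Rightarrow> nat \<Rightarrow> real \<Rightarrow> real" where
  "QQ k n x = (\<Sum>j\<in>{0..int n div 2}.
      qq k n j * x ^ nat j * (1 + x) ^ nat (int n - 2*j))"

end

theory Submission
  imports Defs
begin

text \<open>
  Both P_n and Q_n are gamma-expansions, i.e. combinations of the basis x^j (1+x)^(d-2j)
  for a degree d. The operator f \<mapsto> (a + (2kd+a)x) f + 2kx(1-x) f' maps x^j (1+x)^(d-2j) to
  (a + 2kj) x^j (1+x)^(d+1-2j) + 4k(d-2j) x^(j+1) (1+x)^(d-1-2j), and multiplication by x
  shifts the index j by one. Hence both right-hand sides are gamma-expansions of degree one
  higher, and their coefficients are exactly the recurrences defining p and q.
\<close>

definition gamma_poly :: "int \<Rightarrow> (int \<Rightarrow> real) \<Rightarrow> real \<Rightarrow> real" where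
  "gamma_poly d c x = (\<Sum>j\<in>{0..d div 2}. c j * x ^ nat j * (1 + x) ^ nat (d - 2*j))"

lemma gamma_poly_cong:
  assumes "\<And>j. 0 \<le> j \<Longrightarrow> c j = c' j"
  shows "gamma_poly d c x = gamma_poly d c' x"
  unfolding gamma_poly_def using assms by (intro sum.cong) auto

lemma gamma_poly_add:
  "gamma_poly d (\<lambda>j. c j + c' j) x = gamma_poly d c x + gamma_poly d c' x"
  by (simp add: gamma_poly_def sum.distrib distrib_right)

lemma gamma_poly_scale:
  "t * gamma_poly d c x = gamma_poly d (\<lambda>j. t * c j) x"
  by (simp add: gamma_poly_def sum_distrib_left mult.assoc)

lemma gamma_poly_eq_sum:
  assumes "finite J" and outside_J: "\<And>j. j \<notin> J \<Longrightarrow> c j = 0"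
    and support: "\<And>j. j < 0 \<or> d < 2*j \<Longrightarrow> c j = 0"
  shows "gamma_poly d c x = (\<Sum>j\<in>J. c j * x ^ nat j * (1 + x) ^ nat (d - 2*j))"
proof -
  let ?f = "\<lambda>j. c j * x ^ nat j * (1 + x) ^ nat (d - 2*j)"
  have outside_range: "c j = 0" if "j \<notin> {0..d div 2}" for j
    using support that by force
  have "gamma_poly d c x = sum ?f (J \<inter> {0..d div 2})"
    unfolding gamma_poly_def using outside_J by (intro sum.mono_neutral_right) auto
  also have "\<dots> = sum ?f J"
    using \<open>finite J\<close> outside_range by (intro sum.mono_neutral_left) auto
  finally show ?thesis .
qed

lemma gamma_poly_shift:
  assumes support: "\<And>j. j < 0 \<or> d < 2*j \<Longrightarrow> c j = 0"
  shows "x * gamma_poly d c x = gamma_poly (d + 2) (\<lambda>j. c (j - 1)) x"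
proof -
  let ?J = "(\<lambda>j. j + 1) ` {0..d div 2}"
  have "gamma_poly (d + 2) (\<lambda>j. c (j - 1)) x
      = (\<Sum>i\<in>?J. c (i - 1) * x ^ nat i * (1 + x) ^ nat (d + 2 - 2*i))"
  proof (rule gamma_poly_eq_sum)
    show "c (i - 1) = 0" if "i \<notin> ?J" for i
      using support[of "i - 1"] that by (force simp: image_iff)
  qed (use support in auto)
  also have "\<dots> = (\<Sum>j\<in>{0..d div 2}. c j * x ^ nat (j + 1) * (1 + x) ^ nat (d - 2*j))"
    by (rule sum.reindex_cong[of "\<lambda>j. j + 1"]) (auto simp: algebra_simps)
  also have "\<dots> = x * gamma_poly d c x"
    by (simp add: gamma_poly_def sum_distrib_left nat_add_distrib algebra_simps)
  finally show ?thesis ..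
qed

lemma has_field_derivative_gamma_poly:
  fixes x :: real
  shows "(gamma_poly d c has_field_derivative
     (\<Sum>j\<in>{0..d div 2}. c j * (real (nat j) * x ^ (nat j - 1) * (1 + x) ^ nat (d - 2*j)
                               + real (nat (d - 2*j)) * x ^ nat j * (1 + x) ^ (nat (d - 2*j) - 1)))) (at x)"
  unfolding gamma_poly_def[abs_def]
  by (rule DERIV_sum) (auto intro!: derivative_eq_intros simp: algebra_simps)

lemma gamma_basis_operator:
  fixes a k x :: real and i e :: nat
  shows "(a + (2*k*(e + 2*i) + a)*x) * (x^i * (1+x)^e)
      + 2*k*x*(1-x) * (i * x^(i-1) * (1+x)^e + e * x^i * (1+x)^(e-1))
    = (a + 2*k*i) * (x^i * (1+x)^(e+1)) + 4*k*e * (x * (x^i * (1+x)^(e-1)))"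
  by (cases i; cases e) (simp_all add: algebra_simps)

lemma gamma_poly_operator:
  fixes a k x :: real
  assumes support: "\<And>j. j < 0 \<or> d < 2*j \<Longrightarrow> c j = 0"
  shows "(a + (2*k*d + a)*x) * gamma_poly d c x + 2*k*x*(1-x) * deriv (gamma_poly d c) x
       = gamma_poly (d + 1) (\<lambda>j. (a + 2*k*j) * c j + 4*k*(d - 2*j + 2) * c (j - 1)) x"
proof -
  let ?b = "\<lambda>d j. x ^ nat j * (1 + x) ^ nat (d - 2*j)"
  let ?db = "\<lambda>j. real (nat j) * x ^ (nat j - 1) * (1 + x) ^ nat (d - 2*j)
                 + real (nat (d - 2*j)) * x ^ nat j * (1 + x) ^ (nat (d - 2*j) - 1)"
  let ?g = "\<lambda>j. 4*k*(d - 2*j) * c j"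
  have termwise: "(a + (2*k*d + a)*x) * ?b d j + 2*k*x*(1-x) * ?db j
      = (a + 2*k*j) * ?b (d + 1) j + 4*k*(d - 2*j) * (x * ?b (d - 1) j)"
    if "j \<in> {0..d div 2}" for j
  proof -
    define i e where "i = nat j" and "e = nat (d - 2*j)"
    have exponents: "nat j = i" "nat (d - 2*j) = e"
        "nat (d + 1 - 2*j) = e + 1" "nat (d - 1 - 2*j) = e - 1"
      and coefficients: "real_of_int d = real e + 2 * real i" "real_of_int j = real i"
        "real_of_int (d - 2*j) = real e"
      using that by (auto simp: i_def e_def)
    show ?thesis
      using gamma_basis_operator[of a k e i x]
      by (simp only: exponents coefficients of_nat_add of_nat_mult of_nat_numeral)
  qed
  have c_outside: "c j = 0" if "j \<notin> {0..d div 2}" for j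
    using support that by force
  have g_support: "?g j = 0" if "j < 0 \<or> d - 1 < 2*j" for j
    using support[of j] that by (cases "d = 2*j") auto
  have "(a + (2*k*d + a)*x) * gamma_poly d c x + 2*k*x*(1-x) * deriv (gamma_poly d c) x
      = (\<Sum>j\<in>{0..d div 2}. c j * ((a + (2*k*d + a)*x) * ?b d j + 2*k*x*(1-x) * ?db j))"
    by (simp add: DERIV_imp_deriv[OF has_field_derivative_gamma_poly] gamma_poly_def
        sum_distrib_left sum.distrib distrib_left mult.left_commute mult.assoc)
  also have "\<dots> = (\<Sum>j\<in>{0..d div 2}.
                    c j * ((a + 2*k*j) * ?b (d + 1) j + 4*k*(d - 2*j) * (x * ?b (d - 1) j)))"
    by (rule sum.cong) (simp_all only: termwise)
  also have "\<dots> = (\<Sum>j\<in>{0..d div 2}. (a + 2*k*j) * c j * ?b (d + 1) j)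
                 + x * (\<Sum>j\<in>{0..d div 2}. ?g j * ?b (d - 1) j)"
    unfolding sum_distrib_left sum.distrib[symmetric]
    by (intro sum.cong refl) (simp add: algebra_simps)
  also have "\<dots> = gamma_poly (d + 1) (\<lambda>j. (a + 2*k*j) * c j) x + x * gamma_poly (d - 1) ?g x"
  proof -
    have "gamma_poly (d + 1) (\<lambda>j. (a + 2*k*j) * c j) x
        = (\<Sum>j\<in>{0..d div 2}. (a + 2*k*j) * c j * ?b (d + 1) j)"
      unfolding mult.assoc[symmetric] by (rule gamma_poly_eq_sum) (use support c_outside in auto)
    moreover have "gamma_poly (d - 1) ?g x = (\<Sum>j\<in>{0..d div 2}. ?g j * ?b (d - 1) j)"
      unfolding mult.assoc[symmetric] by (rule gamma_poly_eq_sum) (use c_outside g_support in auto)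
    ultimately show ?thesis
      by simp
  qed
  also have "\<dots> = gamma_poly (d + 1) (\<lambda>j. (a + 2*k*j) * c j) x
                 + gamma_poly (d + 1) (\<lambda>j. ?g (j - 1)) x"
    using gamma_poly_shift[of "d - 1" ?g x] g_support by (simp add: add.commute)
  also have "\<dots> = gamma_poly (d + 1) (\<lambda>j. (a + 2*k*j) * c j + 4*k*(d - 2*j + 2) * c (j - 1)) x"
    unfolding gamma_poly_add[symmetric] by (rule gamma_poly_cong) (simp add: algebra_simps)
  finally show ?thesis .
qed

lemma pp_qq_vanish:
  "(j < 0 \<or> int n - 1 < 2*j \<longrightarrow> pp k n j = 0) \<and> (j < 0 \<or> int n < 2*j \<longrightarrow> qq k n j = 0)"
proof (induction n arbitrary: j rule: less_induct)
  case (less n)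
  show ?case
  proof (cases n)
    case 0
    then show ?thesis by simp
  next
    case (Suc m)
    have pp_m: "pp k m i = 0" if "i < 0 \<or> int m - 1 < 2*i" for i
      using less[of m] Suc that by auto
    have qq_m: "qq k m i = 0" if "i < 0 \<or> int m < 2*i" for i
      using less[of m] Suc that by auto
    have pp_pred: "real m * pp k (m-1) i = 0" if "i < 0 \<or> int m - 2 < 2*i" for i
      using less[of "m-1"] Suc that by (cases m) auto
    have qq_pred: "real m * qq k (m-1) i = 0" if "i < 0 \<or> int m - 1 < 2*i" for i
      using less[of "m-1"] Suc that by (cases m) auto
    have "pp k (Suc m) j = 0" if "j < 0 \<or> int m < 2*j"
    proof (cases "j < 0")
      case False
      have "(real m - 2 * of_int j + 1) * pp k m (j-1) = 0"
        using pp_m[of "j-1"] that of_int_eq_iff[of "2*j" "int m + 1", where 'a=real]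
        by (cases "2*j = int m + 1") auto
      then show ?thesis
        using False that pp_m[of j] qq_m[of j] pp_pred[of "j-1"] by auto
    qed simp
    moreover have "qq k (Suc m) j = 0" if "j < 0 \<or> int m + 1 < 2*j"
    proof (cases "j < 0")
      case False
      have "(real m - 2 * of_int j + 2) * qq k m (j-1) = 0"
        using qq_m[of "j-1"] that of_int_eq_iff[of "2*j" "int m + 2", where 'a=real]
        by (cases "2*j = int m + 2") auto
      then show ?thesis
        using False that qq_m[of j] pp_m[of "j-1"] qq_pred[of "j-1"] by auto
    qed simp
    ultimately show ?thesis
      using Suc by auto
  qed
qed

lemma pp_vanish: "j < 0 \<or> int n - 1 < 2*j \<Longrightarrow> pp k n j = 0"
  using pp_qq_vanish by blast

lemma qq_vanish: "j < 0 \<or> int n < 2*j \<Longrightarrow> qq k n j = 0"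
  using pp_qq_vanish by blast

lemma PP_eq_gamma_poly: "PP k n = gamma_poly (int n - 1) (pp k n)"
  by (simp add: PP_def gamma_poly_def fun_eq_iff)

lemma QQ_eq_gamma_poly: "QQ k n = gamma_poly (int n) (qq k n)"
  by (simp add: QQ_def gamma_poly_def fun_eq_iff)

lemma x_mult_PP: "x * PP k n x = gamma_poly (int n + 1) (\<lambda>j. pp k n (j - 1)) x"
  using gamma_poly_shift[of "int n - 1" "pp k n" x] pp_vanish
  by (simp add: PP_eq_gamma_poly add.commute)

lemma x_mult_QQ: "x * QQ k n x = gamma_poly (int n + 2) (\<lambda>j. qq k n (j - 1)) x"
  using gamma_poly_shift[of "int n" "qq k n" x] qq_vanish
  by (simp add: QQ_eq_gamma_poly add.commute)

lemma PP_Suc: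
  "PP k (Suc n) x = (1 + (2*k*real n - 2*k + 1)*x) * PP k n x
     + 2*k*x*(1-x) * deriv (PP k n) x + 2*k*real n*x * PP k (n-1) x + QQ k n x"
proof -
  have main: "(1 + (2*k*real n - 2*k + 1)*x) * PP k n x + 2*k*x*(1-x) * deriv (PP k n) x
      = gamma_poly (int n)
          (\<lambda>j. (1 + 2*k*j) * pp k n j + 4*k*(real n - 2 * of_int j + 1) * pp k n (j - 1)) x"
    using gamma_poly_operator[of "int n - 1" "pp k n" 1 k x] pp_vanish
    by (simp add: PP_eq_gamma_poly algebra_simps)
  have pred: "2*k*real n*x * PP k (n-1) x
      = gamma_poly (int n) (\<lambda>j. 2*k*real n * pp k (n-1) (j - 1)) x"
  proof (cases n)
    case (Suc m)
    then show ?thesis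
      using x_mult_PP[of x k m] gamma_poly_scale[of "2*k*real n"]
      by (simp add: mult.assoc add.commute)
  qed (simp add: gamma_poly_def)
  have "PP k (Suc n) x = gamma_poly (int n) (pp k (Suc n)) x"
    by (simp add: PP_eq_gamma_poly)
  also have "\<dots> = gamma_poly (int n)
      (\<lambda>j. ((1 + 2*k*j) * pp k n j + 4*k*(real n - 2 * of_int j + 1) * pp k n (j - 1)
            + 2*k*real n * pp k (n-1) (j - 1)) + qq k n j) x"
    by (rule gamma_poly_cong) simp
  finally show ?thesis
    by (simp only: gamma_poly_add main pred QQ_eq_gamma_poly)
qed

lemma QQ_Suc:
  "QQ k (Suc n) x = 2*k*real n*x * QQ k n x + 2*k*x*(1-x) * deriv (QQ k n) x
     + 2*k*real n*x * QQ k (n-1) x + (2*k-1)*x * PP k n x"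
proof -
  have main: "2*k*real n*x * QQ k n x + 2*k*x*(1-x) * deriv (QQ k n) x
      = gamma_poly (int n + 1)
          (\<lambda>j. 2*k*j * qq k n j + 4*k*(real n - 2 * of_int j + 2) * qq k n (j - 1)) x"
    using gamma_poly_operator[of "int n" "qq k n" 0 k x] qq_vanish
    by (simp add: QQ_eq_gamma_poly algebra_simps)
  have pred: "2*k*real n*x * QQ k (n-1) x
      = gamma_poly (int n + 1) (\<lambda>j. 2*k*real n * qq k (n-1) (j - 1)) x"
  proof (cases n)
    case (Suc m)
    then show ?thesis
      using x_mult_QQ[of x k m] gamma_poly_scale[of "2*k*real n"]
      by (simp add: mult.assoc add.commute)
  qed (simp add: gamma_poly_def)
  have cross: "(2*k-1)*x * PP k n x
      = gamma_poly (int n + 1) (\<lambda>j. (2*k-1) * pp k n (j - 1)) x"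
    using x_mult_PP[of x k n] gamma_poly_scale[of "2*k-1"] by (simp add: mult.assoc)
  have "QQ k (Suc n) x = gamma_poly (int n + 1) (qq k (Suc n)) x"
    by (simp add: QQ_eq_gamma_poly add.commute)
  also have "\<dots> = gamma_poly (int n + 1)
      (\<lambda>j. (2*k*j * qq k n j + 4*k*(real n - 2 * of_int j + 2) * qq k n (j - 1)
            + 2*k*real n * qq k (n-1) (j - 1)) + (2*k-1) * pp k n (j - 1)) x"
    by (rule gamma_poly_cong) simp
  finally show ?thesis
    by (simp only: gamma_poly_add main pred cross)
qed

theorem corollary14:
  fixes k x :: real and n :: nat
  assumes "k > 0"
  shows "PP k (Suc n) x = (1 + (2*k*real n - 2*k + 1)*x) * PP k n x
            + 2*k*x*(1-x) * deriv (PP k n) x + 2*k*real n*x * PP k (n-1) x + QQ k n x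
       \<and> QQ k (Suc n) x = 2*k*real n*x * QQ k n x
            + 2*k*x*(1-x) * deriv (QQ k n) x + 2*k*real n*x * QQ k (n-1) x
            + (2*k-1)*x * PP k n x"
  \<comment> \<open>The identities hold for every real k.\<close>
  using PP_Suc QQ_Suc by blast

end
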